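(* Let $n\geq 1$ and let $a_1,\ldots,a_n$ be nonzero integers such that $a_i$ is even for every even index $i$. Suppose the continued fraction \[[a_1,\ldots,a_n]=a_1+\cfrac{1}{a_2+\cfrac{1}{\cdots+\cfrac{1}{a_n}}}\] is well defined (no division by zero occurs) and equals $p/q$, where $p,q$ are coprime integers with $q\neq 0$. Then $n$ is even if and only if $q$ is even.
   Context: Such a continued fraction $[a_1,\ldots,a_n]$ (nonzero integer entries, with all entries in even positions even) is called a semi-even expansion of the rational number it represents. *)

theory Defs
  imports Main "HOL.Rat"
begin

fun cfrac :: "int list \<Rightarrow> rat option" where
  "cfrac [] = None"
| "cfrac [a] = Some (of_int a)"
| "cfrac (a # b # rest) =
     (case cfrac (b # rest) of
        None \<Rightarrow> None
      | Some x \<Rightarrow> (if x = 0 then None else Some (of_int a + 1 / x)))"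

end

theory Submission
  imports Defs
begin

text \<open>Unfolding from the right, \<open>[a, a\<^sub>2, \<dots>, a\<^sub>n] = (a p + q) / p\<close> where
  \<open>[a\<^sub>2, \<dots>, a\<^sub>n] = p / q\<close>, starting from the formal value \<open>1 / 0\<close> of the empty
  expansion; the numerator and denominator so produced are coprime. Modulo 2 an even
  entry \<open>b\<close> makes the denominator of \<open>[a, b, c, \<dots>]\<close> agree with that of \<open>[c, \<dots>]\<close>,
  so for a semi-even expansion the denominator is even exactly when the length is.
  Coprime representations of a rational agree up to sign, hence every \<open>p / q\<close> in
  lowest terms has a denominator of the same parity.\<close>

primrec cfrac_num_den :: "int list \<Rightarrow> int \<times> int" where
  "cfrac_num_den [] = (1, 0)"
| "cfrac_num_den (a # as) = (case cfrac_num_den as of (p, q) \<Rightarrow> (a * p + q, p))"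

lemma coprime_cfrac_num_den: "coprime (fst (cfrac_num_den as)) (snd (cfrac_num_den as))"
proof (induction as)
  case Nil
  then show ?case by simp
next
  case (Cons a as)
  obtain p q where pq: "cfrac_num_den as = (p, q)" by fastforce
  have "gcd (a * p + q) p = gcd p q"
    by (simp add: gcd.commute gcd_add_mult)
  with Cons.IH pq have "coprime (a * p + q) p"
    by (simp add: coprime_iff_gcd_eq_1)
  with pq show ?case by simp
qed

lemma cfrac_eq_num_den:
  assumes "cfrac as = Some x" "cfrac_num_den as = (p, q)"
  shows "q \<noteq> 0 \<and> x = of_int p / of_int q"
  using assms
proof (induction as arbitrary: x p q rule: cfrac.induct)
  case 1
  then show ?case by simp
next
  case (2 a)
  then show ?case by simp
next
  case (3 a b rest)
  obtain y where y: "cfrac (b # rest) = Some y" "y \<noteq> 0" and x: "x = of_int a + 1 / y"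
    using "3.prems"(1) by (auto split: option.splits if_splits)
  obtain p' q' where pq': "cfrac_num_den (b # rest) = (p', q')" by fastforce
  with "3.IH"[OF y(1)] have "q' \<noteq> 0" "y = of_int p' / of_int q'" by auto
  with y(2) have "p' \<noteq> 0" by auto
  moreover have "p = a * p' + q'" "q = p'"
    using "3.prems"(2) pq' by auto
  ultimately show ?case
    using x \<open>y = of_int p' / of_int q'\<close> \<open>q' \<noteq> 0\<close> by (simp add: field_simps)
qed

lemma even_cfrac_den_iff_even_length:
  assumes "\<forall>i < length as. odd i \<longrightarrow> even (as ! i)"
  shows "even (snd (cfrac_num_den as)) \<longleftrightarrow> even (length as)"
  using assms
proof (induction as rule: induct_list012)
  case (3 a b rest)
  have "even b" using "3.prems"[rule_format, of 1] by simp
  moreover have "\<forall>i < length rest. odd i \<longrightarrow> even (rest ! i)"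
    using "3.prems"[rule_format, of "Suc (Suc i)" for i] by simp
  ultimately show ?case
    using "3.IH"(1) by (simp add: case_prod_unfold)
qed simp_all

lemma abs_den_eq_if_coprime_fractions_eq:
  fixes p q p' q' :: int
  assumes "coprime p q" "coprime p' q'" "q \<noteq> 0" "q' \<noteq> 0"
    and "(of_int p / of_int q :: 'a :: field_char_0) = of_int p' / of_int q'"
  shows "\<bar>q\<bar> = \<bar>q'\<bar>"
proof -
  have "(of_int (p * q') :: 'a) = of_int (p' * q)"
    using assms(3-5) by (simp add: field_simps)
  then have "\<bar>p\<bar> * \<bar>q'\<bar> = \<bar>p'\<bar> * \<bar>q\<bar>"
    by (simp only: of_int_eq_iff abs_mult [symmetric])
  with assms(1,2) show ?thesis
    using coprime_crossproduct_int [of p q p' q'] by simp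
qed

theorem proposition4:
  fixes as :: "int list" and p q :: int
  assumes "length as \<ge> 1"
    and "\<forall>i < length as. as ! i \<noteq> 0"
    and "\<forall>i < length as. even (i + 1) \<longrightarrow> even (as ! i)"
    and "cfrac as = Some (of_int p / of_int q)"
    and "coprime p q"
    and "q \<noteq> 0"
  shows "even (length as) \<longleftrightarrow> even q"
proof -
  \<comment> \<open>Nonemptiness and nonzero entries are not needed: well-definedness is already
    part of \<open>cfrac as = Some _\<close>.\<close>
  obtain p' q' where num_den: "cfrac_num_den as = (p', q')" by fastforce
  with assms(4) have "q' \<noteq> 0" "of_int p / of_int q = (of_int p' / of_int q' :: rat)"
    using cfrac_eq_num_den by blast+
  moreover have "coprime p' q'"
    using coprime_cfrac_num_den [of as] num_den by simp
  ultimately have "\<bar>q\<bar> = \<bar>q'\<bar>"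
    using assms(5,6) abs_den_eq_if_coprime_fractions_eq by blast
  then have "even q \<longleftrightarrow> even q'"
    by (metis dvd_abs_iff)
  also have "\<dots> \<longleftrightarrow> even (length as)"
    using even_cfrac_den_iff_even_length [of as] assms(3) num_den by simp
  finally show ?thesis by simp
qed

end
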